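(* Let $X\subset\mathcal A^{\mathbb Z}$ be a shift of finite type given by a $0$-$1$ adjacency matrix $M$ indexed by the finite alphabet $\mathcal A$ (so $X=\{x:M_{x_ix_{i+1}}=1\ \forall i\}$), and suppose $M^2>0$ (all entries positive). Let $c_S^n=2^{-n}$ for all $S$. Then $$\operatorname{Asc}(X,\mathscr U_0,\sigma)=\frac14\sum_{k=1}^\infty\frac{\log|\mathscr L_{k}(X)|}{2^k}.$$
   Context: $\sigma$ is the shift. $\mathscr U_0$ is the open cover (partition) of $X$ by rank-0 cylinders $\{x\in X:x_0=a\}$, $a\in\mathcal A$. $\mathscr L_k(X)$ is the set of words of length $k$ occurring in points of $X$. For $S\subset n^*=\{0,\dots,n-1\}$, $\mathscr U_S=\bigvee_{i\in S}\sigma^{-i}\mathscr U$ and $N(\cdot)$ is the minimal cardinality of a subcover; $\operatorname{Asc}(X,\mathscr U,\sigma)=\lim_{n\to\infty}\frac1n\sum_{S\subset n^*}c_S^n\log N(\mathscr U_S)$. *)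

theory Defs
  imports "HOL-Analysis.Analysis"
begin

definition shift :: "(int \<Rightarrow> 'a) \<Rightarrow> (int \<Rightarrow> 'a)" where
  "shift x = (\<lambda>i. x (i + 1))"

definition sft :: "('a \<Rightarrow> 'a \<Rightarrow> nat) \<Rightarrow> (int \<Rightarrow> 'a) set" where
  "sft M = {x. \<forall>i. M (x i) (x (i + 1)) = 1}"

definition rank0_cover :: "(int \<Rightarrow> 'a) set \<Rightarrow> (int \<Rightarrow> 'a) set set" where
  "rank0_cover X = (\<lambda>a. {x \<in> X. x 0 = a}) ` UNIV"

text \<open>Join over i in S of the preimages sigma^{-i} U (relative to X); the empty join is {X}.\<close>
definition cover_join ::
  "(int \<Rightarrow> 'a) set \<Rightarrow> (int \<Rightarrow> 'a) set set \<Rightarrow> nat set \<Rightarrow> (int \<Rightarrow> 'a) set set" where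
  "cover_join X U S =
     {X \<inter> (\<Inter>i\<in>S. (shift ^^ i) -` f i) | f. \<forall>i\<in>S. f i \<in> U}"

definition min_subcover :: "(int \<Rightarrow> 'a) set \<Rightarrow> (int \<Rightarrow> 'a) set set \<Rightarrow> nat" where
  "min_subcover X C = Inf {card V | V. V \<subseteq> C \<and> finite V \<and> \<Union>V = X}"

definition lang :: "(int \<Rightarrow> 'a) set \<Rightarrow> nat \<Rightarrow> 'a list set" where
  "lang X k = {w. length w = k \<and> (\<exists>x\<in>X. \<forall>j<k. w ! j = x (int j))}"

end

theory Submission
  imports Defs
begin

(* Let F S = ln N(U_S). The join of the rank-0 cylinders over S partitions X by the symbols
   read at the positions of S, so N(U_S) is the number of S-patterns of X. On an interval of
   length k this is f k = ln |L_k(X)|, and since M^2 > 0 any two points can be glued across one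
   free coordinate, so F is additive across gaps of S. Removing the largest element n of S,
   which ends a run of length r, lowers F by f r - f (r - 1); telescoping, F S is the sum over
   all windows {i+1-j..i} \<subseteq> S of the second differences f j - 2 f (j - 1) + f (j - 2). A
   window of length j lies in a uniformly random S with probability 2^-j, so the averages are
   Cesaro means of the partial sums of \<Sum>j (f j - 2 f (j - 1) + f (j - 2)) / 2^j, a series
   whose value is (1/4) \<Sum>k f k / 2^k. *)

lemma funpow_shift: "(shift ^^ i) x = (\<lambda>j. x (j + int i))"
  by (induction i arbitrary: x) (auto simp: shift_def algebra_simps)

lemma sft_translate: "x \<in> sft M \<Longrightarrow> (\<lambda>j. x (j + c)) \<in> sft M"
proof -
  assume "x \<in> sft M"
  then have "M (x (i + c)) (x (i + c + 1)) = 1" for i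
    unfolding sft_def by blast
  then show ?thesis
    unfolding sft_def by (simp add: ac_simps)
qed

lemma shift_sft: "shift ` sft M \<subseteq> sft M"
  unfolding shift_def using sft_translate by blast

definition pattern :: "nat set \<Rightarrow> (int \<Rightarrow> 'a) \<Rightarrow> nat \<Rightarrow> 'a" where
  "pattern S x = restrict (\<lambda>i. x (int i)) S"

definition patterns :: "(int \<Rightarrow> 'a) set \<Rightarrow> nat set \<Rightarrow> (nat \<Rightarrow> 'a) set" where
  "patterns X S = pattern S ` X"

lemma pattern_eq_iff: "pattern S x = pattern S y \<longleftrightarrow> (\<forall>i\<in>S. x (int i) = y (int i))"
  unfolding pattern_def fun_eq_iff restrict_def by force

lemma restrict_pattern: "T \<subseteq> S \<Longrightarrow> restrict (pattern S x) T = pattern T x"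
  unfolding pattern_def by (auto simp: restrict_def fun_eq_iff)

lemma patterns_subset_PiE: "patterns X S \<subseteq> S \<rightarrow>\<^sub>E UNIV"
  unfolding patterns_def pattern_def by auto

lemma finite_patterns: "finite S \<Longrightarrow> finite (patterns X S :: (nat \<Rightarrow> 'a::finite) set)"
  by (rule finite_subset[OF patterns_subset_PiE]) (simp add: finite_PiE)

lemma cover_join_rank0_eq:
  assumes "shift ` X \<subseteq> X"
  shows "cover_join X (rank0_cover X) S = range (\<lambda>g. {x\<in>X. \<forall>i\<in>S. x (int i) = g i})"
proof -
  have "(shift ^^ i) x \<in> X" if "x \<in> X" for x i
    using that assms by (induction i) auto
  then have cylinder: "X \<inter> (\<Inter>i\<in>S. (shift ^^ i) -` {y\<in>X. y 0 = g i})
      = {x\<in>X. \<forall>i\<in>S. x (int i) = g i}" for g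
    by (auto simp: funpow_shift)
  show ?thesis
  proof (intro equalityI subsetI)
    fix v assume "v \<in> cover_join X (rank0_cover X) S"
    then obtain f where v: "v = X \<inter> (\<Inter>i\<in>S. (shift ^^ i) -` f i)"
      and "\<forall>i\<in>S. f i \<in> rank0_cover X"
      unfolding cover_join_def by blast
    then have "\<forall>i\<in>S. \<exists>a. f i = {y\<in>X. y 0 = a}"
      unfolding rank0_cover_def by blast
    then obtain g where "\<forall>i\<in>S. f i = {y\<in>X. y 0 = g i}"
      by (rule bchoice[elim_format]) blast
    then have "v = {x\<in>X. \<forall>i\<in>S. x (int i) = g i}"
      unfolding v cylinder[symmetric] by simp
    then show "v \<in> range (\<lambda>g. {x\<in>X. \<forall>i\<in>S. x (int i) = g i})" by blast
  next
    fix v assume "v \<in> range (\<lambda>g. {x\<in>X. \<forall>i\<in>S. x (int i) = g i})"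
    then obtain g where "v = X \<inter> (\<Inter>i\<in>S. (shift ^^ i) -` {y\<in>X. y 0 = g i})"
      unfolding cylinder by blast
    moreover have "{y\<in>X. y 0 = g i} \<in> rank0_cover X" for i
      unfolding rank0_cover_def by blast
    ultimately show "v \<in> cover_join X (rank0_cover X) S"
      unfolding cover_join_def by (intro CollectI exI[of _ "\<lambda>i. {y\<in>X. y 0 = g i}"]) simp
  qed
qed

lemma min_subcover_rank0_join:
  fixes X :: "(int \<Rightarrow> 'a::finite) set"
  assumes shift_closed: "shift ` X \<subseteq> X" and "finite S"
  shows "min_subcover X (cover_join X (rank0_cover X) S) = card (patterns X S)"
proof -
  let ?C = "range (\<lambda>g. {x\<in>X. \<forall>i\<in>S. x (int i) = g i})"
  have lower: "card (patterns X S) \<le> card V" if "V \<subseteq> ?C" "finite V" "\<Union>V = X" for V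
  proof -
    have one: "card (pattern S ` v) \<le> 1" if "v \<in> V" for v
    proof -
      obtain g where "v = {x\<in>X. \<forall>i\<in>S. x (int i) = g i}" using \<open>v \<in> V\<close> \<open>V \<subseteq> ?C\<close> by blast
      then have "pattern S ` v \<subseteq> {restrict g S}"
        by (auto simp: pattern_def restrict_def)
      then have "card (pattern S ` v) \<le> card {restrict g S}" by (intro card_mono) auto
      then show ?thesis by simp
    qed
    have "card (patterns X S) = card (\<Union>v\<in>V. pattern S ` v)"
      unfolding patterns_def \<open>\<Union>V = X\<close>[symmetric] by (simp add: image_Union)
    also have "\<dots> \<le> (\<Sum>v\<in>V. card (pattern S ` v))" by (rule card_UN_le[OF \<open>finite V\<close>])
    also have "\<dots> \<le> (\<Sum>v\<in>V. 1)" by (rule sum_mono[OF one])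
    finally show ?thesis by simp
  qed
  define V0 where "V0 = (\<lambda>p. {x\<in>X. pattern S x = p}) ` patterns X S"
  have V0: "V0 \<subseteq> ?C" "finite V0" "\<Union>V0 = X"
  proof
    fix v assume "v \<in> V0"
    then obtain y where "v = {x\<in>X. pattern S x = pattern S y}" unfolding V0_def patterns_def by blast
    then show "v \<in> ?C" unfolding pattern_eq_iff by (intro image_eqI[where x = "\<lambda>i. y (int i)"]) auto
  qed (use finite_patterns[OF \<open>finite S\<close>] in \<open>auto simp: V0_def patterns_def\<close>)
  moreover have "card V0 \<le> card (patterns X S)"
    unfolding V0_def by (rule card_image_le[OF finite_patterns[OF \<open>finite S\<close>]])
  ultimately have "card (patterns X S) = card V0"
    using lower by (simp add: le_antisym)
  then have "card (patterns X S) \<in> {card V |V. V \<subseteq> ?C \<and> finite V \<and> \<Union>V = X}"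
    using V0 by blast
  then show ?thesis
    unfolding min_subcover_def cover_join_rank0_eq[OF shift_closed]
    by (rule cInf_eq_minimum) (use lower in blast)
qed

lemma card_patterns_interval:
  assumes translate: "\<And>x c. x \<in> X \<Longrightarrow> (\<lambda>j. x (j + c)) \<in> X"
  shows "card (patterns X {a..<a+k}) = card (lang X k)"
proof -
  define word where "word p = map (\<lambda>j. p (a + j)) [0..<k]" for p :: "nat \<Rightarrow> 'a"
  have "inj_on word ({a..<a+k} \<rightarrow>\<^sub>E UNIV)"
  proof (rule inj_onI)
    fix p q assume p: "p \<in> {a..<a+k} \<rightarrow>\<^sub>E UNIV" and q: "q \<in> {a..<a+k} \<rightarrow>\<^sub>E UNIV"
      and "word p = word q"
    then have pq: "p (a + j) = q (a + j)" if "j < k" for j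
      using that arg_cong[where f = "\<lambda>w. w ! j"] by (simp add: word_def)
    show "p = q"
    proof (rule PiE_ext[OF p q])
      fix i assume "i \<in> {a..<a+k}"
      then have "i = a + (i - a)" "i - a < k" by auto
      then show "p i = q i" using pq by metis
    qed
  qed
  then have "card (patterns X {a..<a+k}) = card (word ` patterns X {a..<a+k})"
    by (intro card_image[symmetric] inj_on_subset[OF _ patterns_subset_PiE])
  also have "word ` patterns X {a..<a+k} = lang X k"
  proof (intro equalityI subsetI)
    fix w assume "w \<in> word ` patterns X {a..<a+k}"
    then obtain x where x: "x \<in> X" "w = word (pattern {a..<a+k} x)"
      by (auto simp: patterns_def)
    then have "w = map (\<lambda>j. x (int j + int a)) [0..<k]"
      by (simp add: word_def pattern_def add.commute)
    then show "w \<in> lang X k"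
      using translate[OF x(1), of "int a"] unfolding lang_def by auto
  next
    fix w assume "w \<in> lang X k"
    then obtain x where x: "x \<in> X" "length w = k" "\<forall>j<k. w ! j = x (int j)"
      unfolding lang_def by blast
    have "(\<lambda>j. x (j + - int a)) \<in> X" using translate[OF x(1)] .
    moreover have "w = word (pattern {a..<a+k} (\<lambda>j. x (j + - int a)))"
      using x(2,3) by (auto simp: word_def pattern_def intro: nth_equalityI)
    ultimately show "w \<in> word ` patterns X {a..<a+k}"
      by (auto simp: patterns_def)
  qed
  finally show ?thesis .
qed

lemma card_patterns_Un:
  assumes glue: "\<And>x y. x \<in> X \<Longrightarrow> y \<in> X \<Longrightarrow>
      \<exists>z\<in>X. (\<forall>j<int m. z j = x j) \<and> (\<forall>j>int m. z j = y j)"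
    and T: "T \<subseteq> {..<m}" and I: "I \<subseteq> {m<..}"
  shows "card (patterns X (T \<union> I)) = card (patterns X T) * card (patterns X I)"
proof -
  define halves where "halves p = (restrict p T, restrict p I)" for p :: "nat \<Rightarrow> 'a"
  have "inj_on halves (patterns X (T \<union> I))"
  proof (rule inj_onI)
    fix p q assume "p \<in> patterns X (T \<union> I)" "q \<in> patterns X (T \<union> I)" "halves p = halves q"
    then obtain x y where pq: "p = pattern (T \<union> I) x" "q = pattern (T \<union> I) y"
      and "pattern T x = pattern T y" "pattern I x = pattern I y"
      by (auto simp: patterns_def halves_def restrict_pattern)
    then show "p = q" unfolding pq pattern_eq_iff by blast
  qed
  moreover have "halves ` patterns X (T \<union> I) = patterns X T \<times> patterns X I"
  proof (intro equalityI subsetI)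
    fix q assume "q \<in> halves ` patterns X (T \<union> I)"
    then show "q \<in> patterns X T \<times> patterns X I"
      by (auto simp: patterns_def halves_def restrict_pattern)
  next
    fix q assume "q \<in> patterns X T \<times> patterns X I"
    then obtain x y where "x \<in> X" "y \<in> X" and q: "q = (pattern T x, pattern I y)"
      by (auto simp: patterns_def)
    then obtain z where "z \<in> X" "\<forall>j<int m. z j = x j" "\<forall>j>int m. z j = y j"
      using glue by blast
    then have "z \<in> X" "pattern T z = pattern T x" "pattern I z = pattern I y"
      using T I by (auto simp: pattern_eq_iff)
    then have "q = halves (pattern (T \<union> I) z)"
      unfolding q halves_def by (simp add: restrict_pattern)
    with \<open>z \<in> X\<close> show "q \<in> halves ` patterns X (T \<union> I)"
      unfolding patterns_def by blast
  qed
  ultimately show ?thesis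
    by (metis card_image card_cartesian_product)
qed

lemma sft_glue:
  assumes zero_one: "\<forall>a b. M a b = 0 \<or> M a b = 1"
    and sq_pos: "\<forall>a c. (\<Sum>b\<in>UNIV. M a b * M b c) > 0"
    and x: "x \<in> sft M" and y: "y \<in> sft M"
  shows "\<exists>z\<in>sft M. (\<forall>j<m. z j = x j) \<and> (\<forall>j>m. z j = y j)"
proof -
  have "(\<Sum>b\<in>UNIV. M (x (m - 1)) b * M b (y (m + 1))) \<noteq> 0"
    using sq_pos by blast
  then obtain b where "M (x (m - 1)) b * M b (y (m + 1)) \<noteq> 0"
    by (meson sum.neutral)
  moreover have "M a c \<noteq> 0 \<Longrightarrow> M a c = 1" for a c
    using zero_one[rule_format, of a c] by simp
  ultimately have b: "M (x (m - 1)) b = 1" "M b (y (m + 1)) = 1"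
    by simp_all
  define z where "z j = (if j < m then x j else if j = m then b else y j)" for j
  have "M (z i) (z (i + 1)) = 1" for i
  proof -
    consider "i + 1 < m" | "i + 1 = m" | "i = m" | "i > m" by linarith
    then show ?thesis
    proof cases
      case 1
      then show ?thesis using x by (simp add: z_def sft_def)
    next
      case 2
      then have "i = m - 1" by simp
      then show ?thesis using b by (simp add: z_def)
    next
      case 3
      then show ?thesis using b by (simp add: z_def)
    next
      case 4
      then show ?thesis using y by (simp add: z_def sft_def)
    qed
  qed
  then have "z \<in> sft M" by (simp add: sft_def)
  then show ?thesis by (intro bexI[of _ z]) (auto simp: z_def)
qed

lemma card_lang_le: "card (lang (X :: (int \<Rightarrow> 'a::finite) set) k) \<le> CARD('a) ^ k"
proof -
  let ?W = "{w. set w \<subseteq> (UNIV :: 'a set) \<and> length w = k}"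
  have "lang X k \<subseteq> ?W" by (auto simp: lang_def)
  then have "card (lang X k) \<le> card ?W"
    by (rule card_mono[OF finite_lists_length_eq[OF finite_class.finite_UNIV]])
  also have "card ?W = CARD('a) ^ k" by (rule card_lists_length_eq[OF finite_class.finite_UNIV])
  finally show ?thesis .
qed

lemma summable_ln_card_lang:
  "summable (\<lambda>k. ln (real (card (lang (X :: (int \<Rightarrow> 'a::finite) set) k))) / 2 ^ k)"
proof (rule summable_comparison_test')
  let ?C = "ln (real CARD('a))"
  show "summable (\<lambda>k. ?C * (real (Suc k) * (1/2) ^ k))"
    using geometric_deriv_sums[of "1/2 :: real"] by (intro summable_mult) (simp add: sums_iff)
  fix k :: nat
  let ?L = "ln (real (card (lang X k)))"
  have "0 \<le> ?L" by (cases "card (lang X k)") auto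
  have "?L \<le> real k * ?C"
  proof (cases "card (lang X k) = 0")
    case False
    then have "?L \<le> ln (real CARD('a) ^ k)"
      using card_lang_le[of X k] by (intro ln_mono) (simp_all flip: of_nat_power)
    then show ?thesis by (simp add: ln_realpow)
  qed simp
  also have "\<dots> \<le> real (Suc k) * ?C" by (intro mult_right_mono) simp_all
  finally have "norm (?L / 2 ^ k) \<le> real (Suc k) * ?C / 2 ^ k"
    using \<open>0 \<le> ?L\<close> by (simp add: divide_right_mono)
  then show "norm (?L / 2 ^ k) \<le> ?C * (real (Suc k) * (1/2) ^ k)"
    by (simp add: power_one_over mult_ac)
qed

lemma card_Pow_supsets:
  assumes "finite U" "A \<subseteq> U"
  shows "card {S\<in>Pow U. A \<subseteq> S} = 2 ^ (card U - card A)"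
proof -
  have "bij_betw (\<lambda>B. B \<union> A) (Pow (U - A)) {S\<in>Pow U. A \<subseteq> S}"
    by (rule bij_betw_byWitness[of _ "\<lambda>S. S - A"]) (use assms in auto)
  then have "card {S\<in>Pow U. A \<subseteq> S} = card (Pow (U - A))"
    by (simp add: bij_betw_same_card)
  also have "\<dots> = 2 ^ (card U - card A)"
    using assms by (simp add: card_Pow card_Diff_subset finite_subset)
  finally show ?thesis .
qed

lemma sum_Pow_of_bool_supset:
  assumes "finite U" "A \<subseteq> U"
  shows "(\<Sum>S\<in>Pow U. of_bool (A \<subseteq> S) / 2 ^ card U) = (1 / 2 ^ card A :: real)"
proof -
  have "card A \<le> card U" using assms by (rule card_mono)
  have "(\<Sum>S\<in>Pow U. of_bool (A \<subseteq> S) :: real) = 2 ^ (card U - card A)"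
    using assms card_Pow_supsets[OF assms] by (simp add: Int_def)
  also have "\<dots> = 2 ^ card U / 2 ^ card A"
    using \<open>card A \<le> card U\<close> by (simp add: power_diff)
  finally show ?thesis by (simp flip: sum_divide_distrib)
qed

lemma LIMSEQ_Cesaro_mean:
  fixes X :: "nat \<Rightarrow> real"
  assumes "X \<longlonglongrightarrow> L"
  shows "(\<lambda>n. (1 / real n) * (\<Sum>i<n. X i)) \<longlonglongrightarrow> L"
proof (rule LIMSEQ_I)
  fix r :: real assume "r > 0"
  then obtain N where N: "\<And>n. n \<ge> N \<Longrightarrow> \<bar>X n - L\<bar> < r / 2"
    using LIMSEQ_D[OF assms, of "r / 2"] by auto
  define C where "C = (\<Sum>i<N. \<bar>X i - L\<bar>)"
  show "\<exists>n0. \<forall>n\<ge>n0. norm ((1 / real n) * (\<Sum>i<n. X i) - L) < r"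
  proof (intro exI allI impI)
    fix n assume n: "n \<ge> max (N + 1) (nat \<lceil>2 * C / r\<rceil> + 1)"
    then have "N \<le> n" "0 < n" by auto
    have "2 * C / r < real n"
      using n real_nat_ceiling_ge[of "2 * C / r"] by linarith
    then have "C < real n * (r / 2)"
      using \<open>r > 0\<close> by (simp add: field_simps)
    have "\<bar>\<Sum>i<n. X i - L\<bar> \<le> (\<Sum>i<N. \<bar>X i - L\<bar>) + (\<Sum>i\<in>{N..<n}. \<bar>X i - L\<bar>)"
      using sum.atLeastLessThan_concat[of 0 N n "\<lambda>i. \<bar>X i - L\<bar>"] \<open>N \<le> n\<close>
      by (simp add: atLeast0LessThan sum_abs)
    also have "(\<Sum>i\<in>{N..<n}. \<bar>X i - L\<bar>) \<le> (\<Sum>i\<in>{N..<n}. r / 2)"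
      using N by (intro sum_mono) (simp add: less_imp_le)
    also have "\<dots> \<le> real n * (r / 2)" using \<open>r > 0\<close> by simp
    finally have "\<bar>\<Sum>i<n. X i - L\<bar> < real n * r"
      using \<open>C < real n * (r / 2)\<close> unfolding C_def by linarith
    moreover have "(1 / real n) * (\<Sum>i<n. X i) - L = (\<Sum>i<n. X i - L) / real n"
      using \<open>0 < n\<close> by (simp add: sum_subtractf field_simps)
    ultimately show "norm ((1 / real n) * (\<Sum>i<n. X i) - L) < r"
      using \<open>0 < n\<close> by (simp add: field_simps)
  qed
qed

lemma maximal_run_end:
  fixes S :: "nat set"
  assumes "n \<in> S"
  obtains r where "1 \<le> r" "r \<le> n + 1" "{n+1-r..n} \<subseteq> S" "r = n + 1 \<or> n - r \<notin> S"
proof (cases "{..n} \<subseteq> S")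
  case True
  then show ?thesis by (intro that[of "n + 1"]) auto
next
  case False
  define m where "m = Max ({..n} - S)"
  have m: "m \<le> n" "m \<notin> S" using False Max_in[of "{..n} - S"] by (auto simp: m_def)
  have above: "j \<in> S" if "m < j" "j \<le> n" for j
  proof (rule ccontr)
    assume "j \<notin> S"
    then have "j \<le> m" unfolding m_def using \<open>j \<le> n\<close> by (intro Max_ge) auto
    with \<open>m < j\<close> show False by simp
  qed
  have "m < n" using m assms by (cases "m = n") auto
  then show ?thesis
    using m above by (intro that[of "n - m"]) auto
qed

lemma run_window_subset_iff:
  fixes S :: "nat set"
  assumes "{n+1-r..n} \<subseteq> S" "r = n + 1 \<or> n - r \<notin> S" "j \<le> n + 1"
  shows "{n+1-j..n} \<subseteq> S \<longleftrightarrow> j \<le> r"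
proof
  assume "{n+1-j..n} \<subseteq> S"
  show "j \<le> r"
  proof (rule ccontr)
    assume "\<not> j \<le> r"
    then have "n - r \<in> {n+1-j..n}" "n - r \<notin> S" using assms(2,3) by auto
    with \<open>{n+1-j..n} \<subseteq> S\<close> show False by blast
  qed
next
  assume "j \<le> r"
  then have "{n+1-j..n} \<subseteq> {n+1-r..n}" using diff_le_mono2[of j r "n + 1"] by auto
  then show "{n+1-j..n} \<subseteq> S" using assms(1) by blast
qed

locale gap_additive =
  fixes F :: "nat set \<Rightarrow> real" and f :: "nat \<Rightarrow> real"
  assumes F_interval: "F {a..<a+k} = f k"
    and F_Un_gap: "T \<subseteq> {..<m} \<Longrightarrow> I \<subseteq> {m<..} \<Longrightarrow> finite I \<Longrightarrow> F (T \<union> I) = F T + F I"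
begin

lemma F_empty: "F {} = 0"
  using F_Un_gap[of "{}" 0 "{}"] by simp

lemma f_0: "f 0 = 0"
  using F_interval[of 0 0] F_empty by simp

definition second_diff :: "nat \<Rightarrow> real" where
  "second_diff j = f j - 2 * f (j - 1) + f (j - 2)"

lemma sum_second_diff: "(\<Sum>j\<in>{1..r}. second_diff j) = f r - f (r - 1)"
  by (induction r) (simp_all add: second_diff_def)

lemma F_remove_run_end:
  assumes "S \<subseteq> {..n}" "1 \<le> r" "r \<le> n + 1" "{n+1-r..n} \<subseteq> S" "r = n + 1 \<or> n - r \<notin> S"
  shows "F S = F (S - {n}) + f r - f (r - 1)"
proof (cases "r = n + 1")
  case True
  then have "S = {0..<0+(n+1)}" "S - {n} = {0..<0+n}" using assms(1,4) by auto
  then have "F S = f (n + 1)" "F (S - {n}) = f n" by (simp_all only: F_interval)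
  then show ?thesis using True by simp
next
  case False
  define m where "m = n - r"
  have n: "n = m + r" and "m \<notin> S"
    using False assms(3,5) by (simp_all add: m_def)
  define T where "T = S \<inter> {..<m}"
  have "S = T \<union> {m+1..<m+1+r}"
  proof (intro equalityI subsetI)
    fix x assume "x \<in> S"
    with \<open>m \<notin> S\<close> assms(1) have "x \<le> m + r" "x \<noteq> m" by (auto simp: n)
    then show "x \<in> T \<union> {m+1..<m+1+r}" using \<open>x \<in> S\<close> by (auto simp: T_def)
  next
    fix x assume "x \<in> T \<union> {m+1..<m+1+r}"
    then have "x \<in> T \<or> x \<in> {n+1-r..n}" by (auto simp: n)
    then show "x \<in> S" using assms(4) by (auto simp: T_def)
  qed
  moreover have "n \<notin> T" by (simp add: T_def n)
  ultimately have "S - {n} = T \<union> {m+1..<m+1+(r-1)}"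
    using assms(2) by (auto simp: n)
  moreover have "F (T \<union> {m+1..<m+1+k}) = F T + f k" for k
    using F_interval[of "m + 1" k] by (subst F_Un_gap[of _ m]) (auto simp: T_def)
  ultimately show ?thesis using \<open>S = T \<union> {m+1..<m+1+r}\<close> by simp
qed

lemma F_eq_sum_windows:
  "S \<subseteq> {..<n} \<Longrightarrow> F S = (\<Sum>i<n. \<Sum>j\<in>{1..i+1}. of_bool ({i+1-j..i} \<subseteq> S) * second_diff j)"
proof (induction n arbitrary: S)
  case 0
  then show ?case by (simp add: F_empty)
next
  case (Suc n)
  let ?window = "\<lambda>S. \<Sum>j\<in>{1..n+1}. of_bool ({n+1-j..n} \<subseteq> S) * second_diff j"
  have "(\<Sum>i<n. \<Sum>j\<in>{1..i+1}. of_bool ({i+1-j..i} \<subseteq> S) * second_diff j)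
      = (\<Sum>i<n. \<Sum>j\<in>{1..i+1}. of_bool ({i+1-j..i} \<subseteq> S - {n}) * second_diff j)"
    by (intro sum.cong refl) auto
  also have "\<dots> = F (S - {n})"
    using Suc.prems by (intro Suc.IH[symmetric]) auto
  finally have "(\<Sum>i<Suc n. \<Sum>j\<in>{1..i+1}. of_bool ({i+1-j..i} \<subseteq> S) * second_diff j)
      = F (S - {n}) + ?window S"
    by simp
  moreover have "F S = F (S - {n}) + ?window S"
  proof (cases "n \<in> S")
    case False
    have "\<not> {n+1-j..n} \<subseteq> S" if "j \<in> {1..n+1}" for j
    proof
      assume "{n+1-j..n} \<subseteq> S"
      moreover have "n \<in> {n+1-j..n}" using that by auto
      ultimately show False using False by blast
    qed
    then have "?window S = 0" by (intro sum.neutral) simp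
    with False show ?thesis by simp
  next
    case True
    then obtain r where r: "1 \<le> r" "r \<le> n + 1" "{n+1-r..n} \<subseteq> S" "r = n + 1 \<or> n - r \<notin> S"
      by (rule maximal_run_end)
    have "{n+1-j..n} \<subseteq> S \<longleftrightarrow> j \<le> r" if "j \<in> {1..n+1}" for j
      using that r by (intro run_window_subset_iff) auto
    then have "?window S = (\<Sum>j\<in>{1..n+1}. of_bool (j \<le> r) * second_diff j)"
      by (intro sum.cong refl) (simp only:)
    also have "\<dots> = (\<Sum>j\<in>{1..r}. second_diff j)"
      using r(2) by (intro sum.mono_neutral_cong_right) auto
    also have "\<dots> = f r - f (r - 1)" by (rule sum_second_diff)
    finally have "?window S = f r - f (r - 1)" .
    moreover have "S \<subseteq> {..n}" using Suc.prems by auto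
    ultimately show ?thesis using F_remove_run_end[OF _ r] by simp
  qed
  ultimately show ?case by linarith
qed

lemma average_F:
  "(\<Sum>S\<in>Pow {..<n}. (1/2) ^ n * F S) = (\<Sum>i<n. \<Sum>j\<in>{1..i+1}. second_diff j / 2 ^ j)"
proof -
  have "(\<Sum>S\<in>Pow {..<n}. (1/2) ^ n * F S)
      = (\<Sum>S\<in>Pow {..<n}. \<Sum>i<n. \<Sum>j\<in>{1..i+1}.
           second_diff j * (of_bool ({i+1-j..i} \<subseteq> S) / 2 ^ n))"
    by (intro sum.cong refl)
      (simp add: F_eq_sum_windows sum_distrib_left power_one_over field_simps)
  also have "\<dots> = (\<Sum>i<n. \<Sum>j\<in>{1..i+1}. \<Sum>S\<in>Pow {..<n}.
           second_diff j * (of_bool ({i+1-j..i} \<subseteq> S) / 2 ^ n))"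
    by (subst sum.swap) (simp add: sum.swap[of _ "Pow {..<n}"])
  also have "\<dots> = (\<Sum>i<n. \<Sum>j\<in>{1..i+1}. second_diff j / 2 ^ j)"
  proof (intro sum.cong refl)
    fix i j assume "i \<in> {..<n}" "j \<in> {1..i+1}"
    then have "{i+1-j..i} \<subseteq> {..<n}" "card {i+1-j..i} = j" by auto
    then have "(\<Sum>S\<in>Pow {..<n}. of_bool ({i+1-j..i} \<subseteq> S) / 2 ^ n) = (1 / 2 ^ j :: real)"
      using sum_Pow_of_bool_supset[of "{..<n}" "{i+1-j..i}"] by simp
    then show "(\<Sum>S\<in>Pow {..<n}. second_diff j * (of_bool ({i+1-j..i} \<subseteq> S) / 2 ^ n))
        = second_diff j / 2 ^ j"
      by (simp only: sum_distrib_left[symmetric]) simp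
  qed
  finally show ?thesis .
qed

lemma second_diff_sums:
  assumes "summable (\<lambda>k. f k / 2 ^ k)"
  shows "(\<lambda>j. second_diff j / 2 ^ j) sums ((1/4) * (\<Sum>k. f (Suc k) / 2 ^ Suc k))"
proof -
  define G where "G = (\<Sum>k. f (Suc k) / 2 ^ Suc k)"
  have "(\<lambda>k. f (Suc k) / 2 ^ Suc k) sums G"
    unfolding G_def
    by (rule summable_sums[OF summable_Suc_iff[of "\<lambda>k. f k / 2 ^ k", THEN iffD2, OF assms]])
  then have g0: "(\<lambda>k. f k / 2 ^ k) sums G"
    using sums_Suc_iff[of "\<lambda>k. f k / 2 ^ k" G] f_0 by simp
  then have "(\<lambda>k. f k / 2 ^ Suc k) sums (G / 2)"
    using sums_divide[OF g0, of 2] by (simp add: mult.commute)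
  then have g1: "(\<lambda>j. f (j - 1) / 2 ^ j) sums (G / 2)"
    using sums_Suc_iff[of "\<lambda>j. f (j - 1) / 2 ^ j" "G / 2"] f_0 by simp
  have "(\<lambda>k. f k / 2 ^ Suc (Suc k)) sums (G / 4)"
    using sums_divide[OF g0, of 4] by (simp add: mult_ac)
  then have g2: "(\<lambda>j. f (j - 2) / 2 ^ j) sums (G / 4)"
    using sums_Suc_iff[of "\<lambda>j. f (j - 2) / 2 ^ j" "G / 4"]
      sums_Suc_iff[of "\<lambda>j. f (Suc j - 2) / 2 ^ Suc j" "G / 4"] f_0 by simp
  have "(\<lambda>j. f j / 2 ^ j - 2 * (f (j - 1) / 2 ^ j) + f (j - 2) / 2 ^ j) sums (G - 2 * (G / 2) + G / 4)"
    by (intro sums_add sums_diff sums_mult g0 g1 g2)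
  then show ?thesis
    unfolding G_def by (simp add: second_diff_def add_divide_distrib diff_divide_distrib)
qed

lemma average_tendsto:
  assumes "summable (\<lambda>k. f k / 2 ^ k)"
  shows "(\<lambda>n. (1 / real n) * (\<Sum>S\<in>Pow {..<n}. (1/2) ^ n * F S))
    \<longlonglongrightarrow> (1/4) * (\<Sum>k. f (Suc k) / 2 ^ Suc k)"
proof -
  have "second_diff 0 = 0" by (simp add: second_diff_def)
  moreover have "{..<i+2} = insert 0 {1..i+1}" for i :: nat by auto
  ultimately have "(\<Sum>j<i+2. second_diff j / 2 ^ j) = (\<Sum>j\<in>{1..i+1}. second_diff j / 2 ^ j)" for i
    by simp
  moreover have "(\<lambda>i. \<Sum>j<i+2. second_diff j / 2 ^ j) \<longlonglongrightarrow> (1/4) * (\<Sum>k. f (Suc k) / 2 ^ Suc k)"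
    using second_diff_sums[OF assms] unfolding sums_def by (rule LIMSEQ_ignore_initial_segment)
  ultimately have "(\<lambda>i. \<Sum>j\<in>{1..i+1}. second_diff j / 2 ^ j) \<longlonglongrightarrow> (1/4) * (\<Sum>k. f (Suc k) / 2 ^ Suc k)"
    by simp
  then show ?thesis
    unfolding average_F by (rule LIMSEQ_Cesaro_mean)
qed

end

lemma gap_additive_sft:
  fixes M :: "'a::finite \<Rightarrow> 'a \<Rightarrow> nat"
  assumes "\<forall>a b. M a b = 0 \<or> M a b = 1" and "\<forall>a c. (\<Sum>b\<in>UNIV. M a b * M b c) > 0"
  shows "gap_additive (\<lambda>S. ln (real (card (patterns (sft M) S))))
    (\<lambda>k. ln (real (card (lang (sft M) k))))"
proof
  fix a k
  have "card (patterns (sft M) {a..<a+k}) = card (lang (sft M) k)"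
    by (rule card_patterns_interval) (rule sft_translate)
  then show "ln (real (card (patterns (sft M) {a..<a+k}))) = ln (real (card (lang (sft M) k)))"
    by simp
next
  fix T I :: "nat set" and m
  assume T: "T \<subseteq> {..<m}" and I: "I \<subseteq> {m<..}" "finite I"
  have "card (patterns (sft M) (T \<union> I)) = card (patterns (sft M) T) * card (patterns (sft M) I)"
    using T I(1) by (rule card_patterns_Un[rotated]) (rule sft_glue[OF assms])
  moreover have "finite T" using T finite_subset by blast
  \<comment> \<open>if \<open>sft M = {}\<close>, every count is 0 and \<open>ln 0 = 0\<close>\<close>
  ultimately show "ln (real (card (patterns (sft M) (T \<union> I))))
      = ln (real (card (patterns (sft M) T))) + ln (real (card (patterns (sft M) I)))"
    using finite_patterns[of T "sft M"] finite_patterns[of I "sft M"] I(2)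
    by (cases "sft M = {}") (auto simp: patterns_def ln_mult card_gt_0_iff)
qed

theorem theorem4p2:
  fixes M :: "'a::finite \<Rightarrow> 'a \<Rightarrow> nat"
  assumes zero_one: "\<forall>a b. M a b = 0 \<or> M a b = 1"
    and sq_pos: "\<forall>a c. (\<Sum>b\<in>UNIV. M a b * M b c) > 0"
  shows "(\<lambda>n. (1 / real n) *
            (\<Sum>S\<in>Pow {..<n}. (1 / 2) ^ n *
               ln (real (min_subcover (sft M) (cover_join (sft M) (rank0_cover (sft M)) S)))))
         \<longlonglongrightarrow> (1 / 4) * (\<Sum>k. ln (real (card (lang (sft M) (Suc k)))) / 2 ^ (Suc k))"
proof -
  interpret gap_additive "\<lambda>S. ln (real (card (patterns (sft M) S)))"
    "\<lambda>k. ln (real (card (lang (sft M) k)))"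
    using zero_one sq_pos by (rule gap_additive_sft)
  have "min_subcover (sft M) (cover_join (sft M) (rank0_cover (sft M)) S) = card (patterns (sft M) S)"
    if "S \<in> Pow {..<n}" for S n
    using that finite_subset by (intro min_subcover_rank0_join shift_sft) auto
  then show ?thesis
    using average_tendsto[OF summable_ln_card_lang] by simp
qed

end
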